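(* Let $\Gamma$ be a countably infinite group, $n\in\mathbb N$, and $f=M-g\in M_n(\mathbb Z\Gamma)$ with $M=\mathrm{diag}(M_1,\dots,M_n)$ for positive integers $M_k$, $M_k>\sum_{m\in[n]}\|g^{(mk)}\|_1$ for every $k\in[n]$, and suppose there is a subsemigroup $P\subseteq\Gamma\setminus\{e_\Gamma\}$ containing $\mathrm{supp}(g^{(mk)})$ for all $m,k\in[n]$. Let $h\in(\mathbb Z\Gamma)^n\setminus(\mathbb Z\Gamma)^nf$. Then there exist $(s,k)\in\Gamma\times[n]$ and an integer $1\le j\le M_k-1$ such that $(hf^{-1})_{s,k}-j/M_k\in\mathbb Z$.
   Context: $\mathbb Z\Gamma$ is the integral group ring (finitely supported $\mathbb Z$-valued functions on $\Gamma$ with convolution $(fg)_t=\sum_sf_{ts^{-1}}g_s$); $\ell^1_{\mathbb R}(\Gamma)$ likewise. Under the hypotheses $f$ is invertible in $M_n(\ell^1_{\mathbb R}(\Gamma))$. $h\in(\mathbb Z\Gamma)^n$ is a row vector, $(hF)_m=\sum_kh_kF^{(km)}$, and $(hf^{-1})_{s,k}$ denotes the value at $s$ of the $k$-th entry of $hf^{-1}\in(\ell^1_{\mathbb R}(\Gamma))^n$; $(\mathbb Z\Gamma)^nf=\{af: a\in(\mathbb Z\Gamma)^n\}$. *)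

theory Defs
  imports "HOL-Analysis.Analysis"
begin

text \<open>The group \<Gamma> is a type of class group_add (not necessarily commutative,
written additively: e = 0, s t = s + t, s^-1 = - s). Indices [n] are {..<n}.
Elements of the integral group ring are functions 'g => int with finite support,
elements of l^1_R are absolutely summable functions 'g => real.
n x n matrices are functions nat => nat => ..., row vectors nat => ..., only
indices < n matter.\<close>

definition supp :: "('g \<Rightarrow> 'a::zero) \<Rightarrow> 'g set" where
  "supp a = {s. a s \<noteq> 0}"

definition in_ZG :: "('g \<Rightarrow> int) \<Rightarrow> bool" where
  "in_ZG a \<longleftrightarrow> finite (supp a)"

definition in_l1 :: "('g \<Rightarrow> real) \<Rightarrow> bool" where
  "in_l1 a \<longleftrightarrow> (\<lambda>s. \<bar>a s\<bar>) summable_on UNIV"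

definition norm1_ZG :: "('g \<Rightarrow> int) \<Rightarrow> int" where
  "norm1_ZG a = (\<Sum>s\<in>supp a. \<bar>a s\<bar>)"

definition conv_ZG :: "('g::group_add \<Rightarrow> int) \<Rightarrow> ('g \<Rightarrow> int) \<Rightarrow> 'g \<Rightarrow> int" where
  "conv_ZG a b t = (\<Sum>s\<in>supp b. a (t - s) * b s)"

definition conv_l1 :: "('g::group_add \<Rightarrow> real) \<Rightarrow> ('g \<Rightarrow> real) \<Rightarrow> 'g \<Rightarrow> real" where
  "conv_l1 a b t = (\<Sum>\<^sub>\<infinity>s. a (t - s) * b s)"

definition delta_e :: "'g::group_add \<Rightarrow> 'a::{zero,one}" where
  "delta_e t = (if t = 0 then 1 else 0)"

definition fmat :: "(nat \<Rightarrow> int) \<Rightarrow> (nat \<Rightarrow> nat \<Rightarrow> 'g::group_add \<Rightarrow> int) \<Rightarrow> nat \<Rightarrow> nat \<Rightarrow> 'g \<Rightarrow> int" where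
  "fmat M g m k t = (if m = k then M k * delta_e t else 0) - g m k t"

definition mat_mul_l1 :: "nat \<Rightarrow> (nat \<Rightarrow> nat \<Rightarrow> 'g::group_add \<Rightarrow> real) \<Rightarrow> (nat \<Rightarrow> nat \<Rightarrow> 'g \<Rightarrow> real)
    \<Rightarrow> nat \<Rightarrow> nat \<Rightarrow> 'g \<Rightarrow> real" where
  "mat_mul_l1 n A B i k = (\<lambda>t. \<Sum>j<n. conv_l1 (A i j) (B j k) t)"

definition vec_mat_l1 :: "nat \<Rightarrow> (nat \<Rightarrow> 'g::group_add \<Rightarrow> real) \<Rightarrow> (nat \<Rightarrow> nat \<Rightarrow> 'g \<Rightarrow> real)
    \<Rightarrow> nat \<Rightarrow> 'g \<Rightarrow> real" where
  "vec_mat_l1 n h F m = (\<lambda>t. \<Sum>k<n. conv_l1 (h k) (F k m) t)"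

definition vec_mat_ZG :: "nat \<Rightarrow> (nat \<Rightarrow> 'g::group_add \<Rightarrow> int) \<Rightarrow> (nat \<Rightarrow> nat \<Rightarrow> 'g \<Rightarrow> int)
    \<Rightarrow> nat \<Rightarrow> 'g \<Rightarrow> int" where
  "vec_mat_ZG n h F m = (\<lambda>t. \<Sum>k<n. conv_ZG (h k) (F k m) t)"

definition to_real_mat :: "(nat \<Rightarrow> nat \<Rightarrow> 'g \<Rightarrow> int) \<Rightarrow> nat \<Rightarrow> nat \<Rightarrow> 'g \<Rightarrow> real" where
  "to_real_mat f i j t = real_of_int (f i j t)"

definition inv_l1 :: "nat \<Rightarrow> (nat \<Rightarrow> nat \<Rightarrow> 'g::group_add \<Rightarrow> real) \<Rightarrow> nat \<Rightarrow> nat \<Rightarrow> 'g \<Rightarrow> real" where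
  "inv_l1 n f = (THE F. (\<forall>i j. (n \<le> i \<or> n \<le> j) \<longrightarrow> F i j = (\<lambda>_. 0))
      \<and> (\<forall>i<n. \<forall>j<n. in_l1 (F i j))
      \<and> (\<forall>i<n. \<forall>k<n. mat_mul_l1 n F f i k = (if i = k then delta_e else (\<lambda>_. 0)))
      \<and> (\<forall>i<n. \<forall>k<n. mat_mul_l1 n f F i k = (if i = k then delta_e else (\<lambda>_. 0))))"

definition in_row_module :: "nat \<Rightarrow> (nat \<Rightarrow> nat \<Rightarrow> 'g::group_add \<Rightarrow> int) \<Rightarrow> (nat \<Rightarrow> 'g \<Rightarrow> int) \<Rightarrow> bool" where
  "in_row_module n f h \<longleftrightarrow> (\<exists>a. (\<forall>k<n. in_ZG (a k)) \<and> (\<forall>m<n. h m = vec_mat_ZG n a f m))"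

end

theory Submission
  imports Defs
begin

(* The solution x = h f^-1 of x f = h lies in l^1 and satisfies
     M_k x_k(t) = h_k(t) + sum over m, s of g^(mk)(s) x_m(t - s),
   where s ranges over supp g^(mk), a subset of P. If no entry of x is congruent to j/M_k
   modulo Z with 1 <= j < M_k, then M_k x_k(t) is an integer only if x_k(t) is. At a
   non-integral point the recurrence bounds the distance of M_k x_k(t) to Z by (M_k - 1)
   times the largest such distance at the predecessors (t - s, m), so some predecessor is
   non-integral, and once the distance at (t, k) is below 1/(2 M_k) that predecessor is at
   least as far from Z. As P is a subsemigroup avoiding the identity, iterating yields
   infinitely many distinct points whose distance to Z stays bounded below, which is
   impossible for x in l^1. Hence x is integral and finitely supported, so h = x f lies in
   (Z Gamma)^n f. *)

section \<open>Convolution of finitely supported functions\<close>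

abbreviation fin_supp :: "('g \<Rightarrow> real) \<Rightarrow> bool" where
  "fin_supp a \<equiv> finite (supp a)"

lemma conv_l1_eq_finite_sum:
  fixes a b :: "'g::group_add \<Rightarrow> real"
  assumes "finite S" "\<And>s. s \<notin> S \<Longrightarrow> a (t - s) * b s = 0"
  shows "conv_l1 a b t = (\<Sum>s\<in>S. a (t - s) * b s)"
  unfolding conv_l1_def
  by (subst infsum_cong_neutral[where T=S and g="\<lambda>s. a (t - s) * b s"]) (use assms in auto)

lemma conv_l1_eq_sum_right:
  fixes a b :: "'g::group_add \<Rightarrow> real"
  assumes "finite S" "supp b \<subseteq> S"
  shows "conv_l1 a b t = (\<Sum>s\<in>S. a (t - s) * b s)"
  by (rule conv_l1_eq_finite_sum) (use assms in \<open>auto simp: supp_def\<close>)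

lemma conv_l1_eq_sum_left:
  fixes a b :: "'g::group_add \<Rightarrow> real"
  assumes "finite S" "supp a \<subseteq> S"
  shows "conv_l1 a b t = (\<Sum>u\<in>S. a u * b (- u + t))"
proof -
  have inj: "inj_on (\<lambda>u. - u + t) S" by (auto intro: inj_onI)
  have "conv_l1 a b t = (\<Sum>s\<in>(\<lambda>u. - u + t) ` S. a (t - s) * b s)"
  proof (rule conv_l1_eq_finite_sum)
    fix s assume "s \<notin> (\<lambda>u. - u + t) ` S"
    moreover have "s = - (t - s) + t" by (simp add: minus_diff_eq add.assoc)
    ultimately have "t - s \<notin> S" by (metis image_eqI)
    thus "a (t - s) * b s = 0" using assms(2) by (auto simp: supp_def)
  qed (use assms(1) in auto)
  also have "\<dots> = (\<Sum>u\<in>S. a u * b (- u + t))"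
  proof -
    have "t - (- u + t) = u" for u
      by (simp only: diff_conv_add_uminus minus_add minus_minus add_minus_cancel)
    thus ?thesis by (simp add: sum.reindex[OF inj])
  qed
  finally show ?thesis .
qed

lemma supp_delta_e: "supp (delta_e :: 'g::group_add \<Rightarrow> real) = {0}"
  by (auto simp: supp_def delta_e_def)

lemma conv_l1_delta_e_scaled_left: "conv_l1 (\<lambda>t. c * delta_e t) b t = c * b t"
  by (subst conv_l1_eq_sum_left[where S="{0}"]) (auto simp: supp_def delta_e_def)

lemma conv_l1_delta_e_scaled_right: "conv_l1 a (\<lambda>t. c * delta_e t) t = c * a t"
  by (subst conv_l1_eq_sum_right[where S="{0}"]) (auto simp: supp_def delta_e_def)

lemma conv_l1_delta_e_left: "conv_l1 delta_e b t = b t"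
  using conv_l1_delta_e_scaled_left[of 1 b t] by simp

lemma conv_l1_delta_e_right: "conv_l1 a delta_e t = a t"
  using conv_l1_delta_e_scaled_right[of a 1 t] by simp

lemma conv_l1_zero_left: "conv_l1 (\<lambda>_. 0) b t = 0"
  by (simp add: conv_l1_def)

lemma conv_l1_zero_right: "conv_l1 a (\<lambda>_. 0) t = 0"
  by (simp add: conv_l1_def)

lemma supp_sum_subset: "supp (\<lambda>t. \<Sum>j\<in>I. b j t) \<subseteq> (\<Union>j\<in>I. supp (b j))"
proof
  fix t assume "t \<in> supp (\<lambda>t. \<Sum>j\<in>I. b j t)"
  then obtain j where "j \<in> I" "b j t \<noteq> 0"
    by (metis (mono_tags, lifting) mem_Collect_eq sum.neutral supp_def)
  thus "t \<in> (\<Union>j\<in>I. supp (b j))" by (auto simp: supp_def)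
qed

lemma supp_diff_subset: "supp (\<lambda>t. (a t::real) - b t) \<subseteq> supp a \<union> supp b"
  by (auto simp: supp_def)

lemma fin_supp_sum: "finite I \<Longrightarrow> (\<And>j. j \<in> I \<Longrightarrow> fin_supp (b j)) \<Longrightarrow> fin_supp (\<lambda>t. \<Sum>j\<in>I. b j t)"
  by (rule finite_subset[OF supp_sum_subset]) auto

lemma fin_supp_diff: "fin_supp a \<Longrightarrow> fin_supp b \<Longrightarrow> fin_supp (\<lambda>t. a t - b t)"
  by (rule finite_subset[OF supp_diff_subset]) auto

lemma fin_supp_div: "fin_supp a \<Longrightarrow> fin_supp (\<lambda>t. a t / c)"
  by (rule finite_subset[of _ "supp a"]) (auto simp: supp_def)

lemma conv_l1_sum_left:
  fixes b :: "'g::group_add \<Rightarrow> real"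
  assumes "fin_supp b"
  shows "conv_l1 (\<lambda>t. \<Sum>j\<in>I. a j t) b t = (\<Sum>j\<in>I. conv_l1 (a j) b t)"
  by (simp add: conv_l1_eq_sum_right[OF assms order_refl] sum_distrib_right sum.swap[of _ I])

lemma conv_l1_sum_right:
  fixes a :: "'g::group_add \<Rightarrow> real"
  assumes "finite I" "\<And>j. j \<in> I \<Longrightarrow> fin_supp (b j)"
  shows "conv_l1 a (\<lambda>t. \<Sum>j\<in>I. b j t) t = (\<Sum>j\<in>I. conv_l1 a (b j) t)"
proof -
  let ?S = "\<Union>j\<in>I. supp (b j)"
  have fin: "finite ?S" using assms by auto
  have "conv_l1 a (\<lambda>t. \<Sum>j\<in>I. b j t) t = (\<Sum>j\<in>I. \<Sum>s\<in>?S. a (t - s) * b j s)"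
    by (simp add: conv_l1_eq_sum_right[OF fin supp_sum_subset] sum_distrib_left sum.swap[of _ ?S])
  also have "\<dots> = (\<Sum>j\<in>I. conv_l1 a (b j) t)"
    by (intro sum.cong refl conv_l1_eq_sum_right[symmetric] fin) auto
  finally show ?thesis .
qed

lemma conv_l1_sum_right':
  fixes a :: "'g::group_add \<Rightarrow> real"
  assumes "fin_supp a"
  shows "conv_l1 a (\<lambda>t. \<Sum>j\<in>I. b j t) t = (\<Sum>j\<in>I. conv_l1 a (b j) t)"
  by (simp add: conv_l1_eq_sum_left[OF assms order_refl] sum_distrib_left sum.swap[of _ "supp a"])

lemma conv_l1_diff_left:
  fixes b :: "'g::group_add \<Rightarrow> real"
  assumes "fin_supp b"
  shows "conv_l1 (\<lambda>t. a1 t - a2 t) b t = conv_l1 a1 b t - conv_l1 a2 b t"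
  by (simp add: conv_l1_eq_sum_right[OF assms order_refl] left_diff_distrib sum_subtractf)

lemma conv_l1_diff_right:
  fixes a :: "'g::group_add \<Rightarrow> real"
  assumes "fin_supp b1" "fin_supp b2"
  shows "conv_l1 a (\<lambda>t. b1 t - b2 t) t = conv_l1 a b1 t - conv_l1 a b2 t"
proof -
  have fin: "finite (supp b1 \<union> supp b2)" using assms by auto
  show ?thesis
    by (simp add: conv_l1_eq_sum_right[OF fin supp_diff_subset] conv_l1_eq_sum_right[OF fin]
        right_diff_distrib sum_subtractf)
qed

lemma conv_l1_div_left:
  fixes b :: "'g::group_add \<Rightarrow> real"
  assumes "fin_supp b"
  shows "conv_l1 (\<lambda>t. a t / c) b t = conv_l1 a b t / c"
  by (simp add: conv_l1_eq_sum_right[OF assms order_refl] sum_divide_distrib)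

lemma conv_l1_div_right:
  fixes a :: "'g::group_add \<Rightarrow> real"
  assumes "fin_supp b"
  shows "conv_l1 a (\<lambda>t. b t / c) t = conv_l1 a b t / c"
proof -
  have "supp (\<lambda>t. b t / c) \<subseteq> supp b" by (auto simp: supp_def)
  thus ?thesis
    by (simp add: conv_l1_eq_sum_right[OF assms] conv_l1_eq_sum_right[OF assms order_refl]
        sum_divide_distrib)
qed

lemma supp_conv_l1:
  fixes a b :: "'g::group_add \<Rightarrow> real"
  assumes "fin_supp b"
  shows "supp (conv_l1 a b) \<subseteq> (\<lambda>(u, s). u + s) ` (supp a \<times> supp b)"
proof
  fix t assume "t \<in> supp (conv_l1 a b)"
  hence "(\<Sum>s\<in>supp b. a (t - s) * b s) \<noteq> 0"
    by (simp add: supp_def conv_l1_eq_sum_right[OF assms order_refl])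
  then obtain s where "s \<in> supp b" "a (t - s) * b s \<noteq> 0"
    by (metis (mono_tags, lifting) sum.neutral)
  hence "(t - s, s) \<in> supp a \<times> supp b" by (auto simp: supp_def)
  moreover have "t = (\<lambda>(u, s). u + s) (t - s, s)" by simp
  ultimately show "t \<in> (\<lambda>(u, s). u + s) ` (supp a \<times> supp b)" by (rule rev_image_eqI)
qed

lemma fin_supp_conv_l1: "fin_supp a \<Longrightarrow> fin_supp b \<Longrightarrow> fin_supp (conv_l1 (a::'g::group_add \<Rightarrow> real) b)"
  by (rule finite_subset[OF supp_conv_l1]) auto

definition l1_norm :: "('g \<Rightarrow> real) \<Rightarrow> real" where
  "l1_norm a = (\<Sum>t\<in>supp a. \<bar>a t\<bar>)"

lemma l1_norm_nonneg: "l1_norm a \<ge> 0"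
  by (simp add: l1_norm_def sum_nonneg)

lemma l1_norm_eq_sum: "finite S \<Longrightarrow> supp a \<subseteq> S \<Longrightarrow> l1_norm a = (\<Sum>t\<in>S. \<bar>a t\<bar>)"
  unfolding l1_norm_def by (rule sum.mono_neutral_left) (auto simp: supp_def)

lemma sum_abs_le_l1_norm:
  assumes "fin_supp a" "finite T"
  shows "(\<Sum>t\<in>T. \<bar>a t\<bar>) \<le> l1_norm a"
proof -
  have "(\<Sum>t\<in>T. \<bar>a t\<bar>) \<le> (\<Sum>t\<in>T \<union> supp a. \<bar>a t\<bar>)"
    by (rule sum_mono2) (use assms in auto)
  also have "\<dots> = l1_norm a" by (rule l1_norm_eq_sum[symmetric]) (use assms in auto)
  finally show ?thesis .
qed

lemma abs_le_l1_norm: "fin_supp a \<Longrightarrow> \<bar>a t\<bar> \<le> l1_norm a"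
  using sum_abs_le_l1_norm[of a "{t}"] by simp

lemma l1_norm_delta_e: "l1_norm (delta_e :: 'g::group_add \<Rightarrow> real) = 1"
  by (simp add: l1_norm_def supp_delta_e delta_e_def)

lemma l1_norm_zero: "l1_norm (\<lambda>_. 0) = 0"
  by (simp add: l1_norm_def supp_def)

lemma l1_norm_div: "l1_norm (\<lambda>t. a t / c) = l1_norm a / \<bar>c\<bar>"
proof (cases "c = 0")
  case False
  hence "supp (\<lambda>t. a t / c) = supp a" by (auto simp: supp_def)
  thus ?thesis by (simp add: l1_norm_def sum_divide_distrib)
qed (simp add: l1_norm_zero)

lemma l1_norm_sum_le:
  assumes "finite I" "\<And>j. j \<in> I \<Longrightarrow> fin_supp (b j)"
  shows "l1_norm (\<lambda>t. \<Sum>j\<in>I. b j t) \<le> (\<Sum>j\<in>I. l1_norm (b j))"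
proof -
  let ?S = "\<Union>j\<in>I. supp (b j)"
  have fin: "finite ?S" using assms by auto
  have "l1_norm (\<lambda>t. \<Sum>j\<in>I. b j t) = (\<Sum>t\<in>?S. \<bar>\<Sum>j\<in>I. b j t\<bar>)"
    by (rule l1_norm_eq_sum[OF fin supp_sum_subset])
  also have "\<dots> \<le> (\<Sum>t\<in>?S. \<Sum>j\<in>I. \<bar>b j t\<bar>)"
    by (intro sum_mono sum_abs)
  also have "\<dots> = (\<Sum>j\<in>I. l1_norm (b j))"
    by (subst sum.swap, intro sum.cong refl l1_norm_eq_sum[symmetric] fin) auto
  finally show ?thesis .
qed

lemma sum_abs_translate_le_l1_norm:
  fixes a :: "'g::group_add \<Rightarrow> real"
  assumes "fin_supp a" "finite U"
  shows "(\<Sum>t\<in>U. \<bar>a (t - s)\<bar>) \<le> l1_norm a"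
proof -
  have inj: "inj_on (\<lambda>t. t - s) U" by (auto intro: inj_onI)
  have "(\<Sum>t\<in>U. \<bar>a (t - s)\<bar>) = (\<Sum>u\<in>(\<lambda>t. t - s) ` U. \<bar>a u\<bar>)"
    by (simp add: sum.reindex[OF inj])
  also have "\<dots> \<le> l1_norm a" by (rule sum_abs_le_l1_norm) (use assms in auto)
  finally show ?thesis .
qed

lemma l1_norm_conv_l1_le:
  fixes a b :: "'g::group_add \<Rightarrow> real"
  assumes fa: "fin_supp a" and fb: "fin_supp b"
  shows "l1_norm (conv_l1 a b) \<le> l1_norm a * l1_norm b"
proof -
  let ?U = "(\<lambda>(u, s). u + s) ` (supp a \<times> supp b)"
  have fin: "finite ?U" using assms by auto
  have "l1_norm (conv_l1 a b) = (\<Sum>t\<in>?U. \<bar>\<Sum>s\<in>supp b. a (t - s) * b s\<bar>)"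
    by (simp add: l1_norm_eq_sum[OF fin supp_conv_l1[OF fb]] conv_l1_eq_sum_right[OF fb order_refl])
  also have "\<dots> \<le> (\<Sum>t\<in>?U. \<Sum>s\<in>supp b. \<bar>a (t - s)\<bar> * \<bar>b s\<bar>)"
    by (intro sum_mono order_trans[OF sum_abs]) (simp add: abs_mult)
  also have "\<dots> = (\<Sum>s\<in>supp b. \<bar>b s\<bar> * (\<Sum>t\<in>?U. \<bar>a (t - s)\<bar>))"
    by (subst sum.swap) (simp add: sum_distrib_left mult.commute)
  also have "\<dots> \<le> (\<Sum>s\<in>supp b. \<bar>b s\<bar> * l1_norm a)"
    by (intro sum_mono mult_left_mono sum_abs_translate_le_l1_norm fa fin) auto
  also have "\<dots> = l1_norm a * l1_norm b"
    unfolding l1_norm_def[of b] sum_distrib_right[symmetric] by (rule mult.commute)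
  finally show ?thesis .
qed

lemma abs_conv_l1_le:
  fixes a b :: "'g::group_add \<Rightarrow> real"
  assumes "\<And>u. \<bar>a u\<bar> \<le> C" "fin_supp b"
  shows "\<bar>conv_l1 a b t\<bar> \<le> C * l1_norm b"
proof -
  have "\<bar>conv_l1 a b t\<bar> \<le> (\<Sum>s\<in>supp b. \<bar>a (t - s)\<bar> * \<bar>b s\<bar>)"
    by (simp add: conv_l1_eq_sum_right[OF assms(2) order_refl] order_trans[OF sum_abs] abs_mult)
  also have "\<dots> \<le> (\<Sum>s\<in>supp b. C * \<bar>b s\<bar>)"
    by (intro sum_mono mult_right_mono assms(1)) auto
  also have "\<dots> = C * l1_norm b" by (simp add: l1_norm_def sum_distrib_left)
  finally show ?thesis .
qed

lemma conv_l1_assoc_fin23: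
  fixes x y z :: "'g::group_add \<Rightarrow> real"
  assumes fy: "fin_supp y" and fz: "fin_supp z"
  shows "conv_l1 (conv_l1 x y) z t = conv_l1 x (conv_l1 y z) t"
proof -
  let ?U = "(\<lambda>(u, s). u + s) ` (supp y \<times> supp z)"
  have finU: "finite ?U" using fy fz by auto
  have inner: "(\<Sum>v\<in>?U. x (t - v) * y (v - s)) = conv_l1 x y (t - s)" if s: "s \<in> supp z" for s
  proof -
    have inj: "inj_on (\<lambda>u. u + s) (supp y)" by (auto intro: inj_onI)
    have sub: "(\<lambda>u. u + s) ` supp y \<subseteq> ?U"
      using s by (auto intro: rev_image_eqI[where x="(_, s)"])
    have "(\<Sum>v\<in>?U. x (t - v) * y (v - s)) = (\<Sum>v\<in>(\<lambda>u. u + s) ` supp y. x (t - v) * y (v - s))"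
    proof (rule sum.mono_neutral_right[OF finU sub])
      show "\<forall>v\<in>?U - (\<lambda>u. u + s) ` supp y. x (t - v) * y (v - s) = 0"
      proof
        fix v assume "v \<in> ?U - (\<lambda>u. u + s) ` supp y"
        moreover have "v = (v - s) + s" by simp
        ultimately have "v - s \<notin> supp y" by (metis DiffD2 image_eqI)
        thus "x (t - v) * y (v - s) = 0" by (simp add: supp_def)
      qed
    qed
    also have "\<dots> = (\<Sum>u\<in>supp y. x (t - s - u) * y u)"
    proof -
      have "t - (u + s) = t - s - u" for u
        by (simp only: diff_conv_add_uminus minus_add add.assoc)
      thus ?thesis by (simp add: sum.reindex[OF inj])
    qed
    also have "\<dots> = conv_l1 x y (t - s)"
      by (rule conv_l1_eq_sum_right[OF fy order_refl, symmetric])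
    finally show ?thesis .
  qed
  have "conv_l1 x (conv_l1 y z) t = (\<Sum>v\<in>?U. \<Sum>s\<in>supp z. x (t - v) * y (v - s) * z s)"
    by (simp only: conv_l1_eq_sum_right[OF finU supp_conv_l1[OF fz]]
        conv_l1_eq_sum_right[OF fz order_refl] sum_distrib_left mult.assoc)
  also have "\<dots> = (\<Sum>s\<in>supp z. conv_l1 x y (t - s) * z s)"
    by (subst sum.swap) (simp add: inner sum_distrib_right[symmetric])
  also have "\<dots> = conv_l1 (conv_l1 x y) z t"
    by (rule conv_l1_eq_sum_right[OF fz order_refl, symmetric])
  finally show ?thesis by (rule sym)
qed

lemma conv_l1_assoc_fin13:
  fixes x y z :: "'g::group_add \<Rightarrow> real"
  assumes fx: "fin_supp x" and fz: "fin_supp z"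
  shows "conv_l1 (conv_l1 x y) z t = conv_l1 x (conv_l1 y z) t"
proof -
  have shift: "- u + (t - s) = (- u + t) - s" for u s :: 'g
    by (simp only: diff_conv_add_uminus add.assoc)
  have "conv_l1 (conv_l1 x y) z t = (\<Sum>s\<in>supp z. \<Sum>u\<in>supp x. x u * (y (- u + t - s) * z s))"
    by (simp only: conv_l1_eq_sum_right[OF fz order_refl] conv_l1_eq_sum_left[OF fx order_refl]
        sum_distrib_right mult.assoc shift)
  also have "\<dots> = (\<Sum>u\<in>supp x. x u * conv_l1 y z (- u + t))"
    by (subst sum.swap) (simp only: conv_l1_eq_sum_right[OF fz order_refl] sum_distrib_left)
  also have "\<dots> = conv_l1 x (conv_l1 y z) t"
    by (rule conv_l1_eq_sum_left[OF fx order_refl, symmetric])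
  finally show ?thesis .
qed

definition fin_supp_mat :: "nat \<Rightarrow> (nat \<Rightarrow> nat \<Rightarrow> 'g \<Rightarrow> real) \<Rightarrow> bool" where
  "fin_supp_mat n X \<longleftrightarrow> (\<forall>i<n. \<forall>k<n. fin_supp (X i k))"

lemma fin_supp_mat_mul:
  "fin_supp_mat n X \<Longrightarrow> fin_supp_mat n Y \<Longrightarrow> fin_supp_mat n (mat_mul_l1 n X (Y::nat \<Rightarrow> nat \<Rightarrow> 'g::group_add \<Rightarrow> real))"
  unfolding fin_supp_mat_def mat_mul_l1_def by (auto intro!: fin_supp_sum fin_supp_conv_l1)

lemma mat_mul_l1_assoc_fin23:
  fixes X Y Z :: "nat \<Rightarrow> nat \<Rightarrow> 'g::group_add \<Rightarrow> real"
  assumes "fin_supp_mat n Y" "fin_supp_mat n Z" "k < n"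
  shows "mat_mul_l1 n (mat_mul_l1 n X Y) Z i k t = mat_mul_l1 n X (mat_mul_l1 n Y Z) i k t"
proof -
  have fY: "\<And>j m. j < n \<Longrightarrow> m < n \<Longrightarrow> fin_supp (Y j m)" and fZ: "\<And>m. m < n \<Longrightarrow> fin_supp (Z m k)"
    using assms unfolding fin_supp_mat_def by auto
  have "mat_mul_l1 n (mat_mul_l1 n X Y) Z i k t
      = (\<Sum>j<n. \<Sum>m<n. conv_l1 (conv_l1 (X i j) (Y j m)) (Z m k) t)"
    unfolding mat_mul_l1_def by (subst sum.swap, intro sum.cong refl conv_l1_sum_left fZ) auto
  also have "\<dots> = (\<Sum>j<n. \<Sum>m<n. conv_l1 (X i j) (conv_l1 (Y j m) (Z m k)) t)"
    by (intro sum.cong refl conv_l1_assoc_fin23 fY fZ) auto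
  also have "\<dots> = mat_mul_l1 n X (mat_mul_l1 n Y Z) i k t"
    unfolding mat_mul_l1_def
    by (intro sum.cong refl conv_l1_sum_right[symmetric]) (auto intro!: fin_supp_conv_l1 fY fZ)
  finally show ?thesis .
qed

lemma mat_mul_l1_assoc_fin13:
  fixes X Y Z :: "nat \<Rightarrow> nat \<Rightarrow> 'g::group_add \<Rightarrow> real"
  assumes "\<And>j. j < n \<Longrightarrow> fin_supp (X i j)" "fin_supp_mat n Z" "k < n"
  shows "mat_mul_l1 n (mat_mul_l1 n X Y) Z i k t = mat_mul_l1 n X (mat_mul_l1 n Y Z) i k t"
proof -
  have fZ: "\<And>m. m < n \<Longrightarrow> fin_supp (Z m k)"
    using assms unfolding fin_supp_mat_def by auto
  have "mat_mul_l1 n (mat_mul_l1 n X Y) Z i k t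
      = (\<Sum>j<n. \<Sum>m<n. conv_l1 (conv_l1 (X i j) (Y j m)) (Z m k) t)"
    unfolding mat_mul_l1_def by (subst sum.swap, intro sum.cong refl conv_l1_sum_left fZ) auto
  also have "\<dots> = (\<Sum>j<n. \<Sum>m<n. conv_l1 (X i j) (conv_l1 (Y j m) (Z m k)) t)"
    by (intro sum.cong refl conv_l1_assoc_fin13 assms fZ) auto
  also have "\<dots> = mat_mul_l1 n X (mat_mul_l1 n Y Z) i k t"
    unfolding mat_mul_l1_def by (intro sum.cong refl conv_l1_sum_right'[symmetric] assms) auto
  finally show ?thesis .
qed

lemma mat_mul_l1_cong:
  assumes "\<And>j. j < n \<Longrightarrow> X i j = X' i j" "\<And>j. j < n \<Longrightarrow> Y j k = Y' j k"
  shows "mat_mul_l1 n X Y i k = mat_mul_l1 n X' Y' i k"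
  unfolding mat_mul_l1_def using assms by simp

lemma tendsto_mat_mul_l1_right:
  fixes Y :: "nat \<Rightarrow> nat \<Rightarrow> 'g::group_add \<Rightarrow> real"
  assumes "\<And>j. j < n \<Longrightarrow> fin_supp (Y i j)"
    and "\<And>j u. j < n \<Longrightarrow> (\<lambda>N. Xs N j k u) \<longlonglongrightarrow> X j k u"
  shows "(\<lambda>N. mat_mul_l1 n Y (Xs N) i k t) \<longlonglongrightarrow> mat_mul_l1 n Y X i k t"
  unfolding mat_mul_l1_def
  by (intro tendsto_sum) (simp add: conv_l1_eq_sum_left[OF assms(1) order_refl] tendsto_intros assms(2))

lemma tendsto_mat_mul_l1_left:
  fixes Y :: "nat \<Rightarrow> nat \<Rightarrow> 'g::group_add \<Rightarrow> real"
  assumes "\<And>j. j < n \<Longrightarrow> fin_supp (Y j k)"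
    and "\<And>j u. j < n \<Longrightarrow> (\<lambda>N. Xs N i j u) \<longlonglongrightarrow> X i j u"
  shows "(\<lambda>N. mat_mul_l1 n (Xs N) Y i k t) \<longlonglongrightarrow> mat_mul_l1 n X Y i k t"
  unfolding mat_mul_l1_def
  by (intro tendsto_sum) (simp add: conv_l1_eq_sum_right[OF assms(1) order_refl] tendsto_intros assms(2))

definition id_mat :: "nat \<Rightarrow> nat \<Rightarrow> 'g::group_add \<Rightarrow> real" where
  "id_mat i k = (if i = k then delta_e else (\<lambda>_. 0))"

lemma fin_supp_id_mat: "fin_supp (id_mat i k)"
  by (simp add: id_mat_def supp_delta_e) (simp add: supp_def)

lemma fin_supp_mat_id_mat: "fin_supp_mat n id_mat"
  by (simp add: fin_supp_mat_def fin_supp_id_mat)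

lemma mat_mul_l1_id_mat_right:
  assumes "k < n"
  shows "mat_mul_l1 n X id_mat i k = X i k"
proof
  fix t
  have "mat_mul_l1 n X id_mat i k t = (\<Sum>m<n. if m = k then X i m t else 0)"
    unfolding mat_mul_l1_def id_mat_def
    by (intro sum.cong refl) (simp add: conv_l1_delta_e_right conv_l1_zero_right)
  thus "mat_mul_l1 n X id_mat i k t = X i k t" using assms by simp
qed

lemma mat_mul_l1_id_mat_left:
  assumes "i < n"
  shows "mat_mul_l1 n id_mat X i k = X i k"
proof
  fix t
  have "mat_mul_l1 n id_mat X i k t = (\<Sum>m<n. if i = m then X m k t else 0)"
    unfolding mat_mul_l1_def id_mat_def
    by (intro sum.cong refl) (simp add: conv_l1_delta_e_left conv_l1_zero_left)
  thus "mat_mul_l1 n id_mat X i k t = X i k t" using assms by simp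
qed

lemma conv_l1_if_delta_left:
  "conv_l1 (\<lambda>t. if c then r * delta_e t else 0) b t = (if c then r * b t else 0)"
  by (cases c) (simp_all add: conv_l1_delta_e_scaled_left conv_l1_zero_left)

lemma conv_l1_if_delta_right:
  "conv_l1 a (\<lambda>t. if c then r * delta_e t else 0) t = (if c then r * a t else 0)"
  by (cases c) (simp_all add: conv_l1_delta_e_scaled_right conv_l1_zero_right)

lemma fin_supp_if_delta: "fin_supp (\<lambda>t::'g::group_add. if c then r * delta_e t else 0)"
  by (rule finite_subset[of _ "{0}"]) (auto simp: supp_def delta_e_def)

lemma abs_le_infsum_abs:
  assumes "in_l1 a"
  shows "\<bar>a u\<bar> \<le> (\<Sum>\<^sub>\<infinity>s. \<bar>a s\<bar>)"
  using finite_sum_le_infsum[of "\<lambda>s. \<bar>a s\<bar>" UNIV "{u}"] assms by (simp add: in_l1_def)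

section \<open>The Neumann series for the inverse of f\<close>

locale diag_dominant =
  fixes n :: nat and M :: "nat \<Rightarrow> int" and g :: "nat \<Rightarrow> nat \<Rightarrow> 'g::group_add \<Rightarrow> int"
  assumes n_pos: "n > 0"
    and g_fin: "\<forall>m<n. \<forall>k<n. in_ZG (g m k)"
    and M_dominant: "\<forall>k<n. M k > (\<Sum>m<n. norm1_ZG (g m k))"
begin

definition g_real :: "nat \<Rightarrow> nat \<Rightarrow> 'g \<Rightarrow> real" where
  "g_real i k t = real_of_int (g i k t)"

definition g_scaled :: "nat \<Rightarrow> nat \<Rightarrow> 'g \<Rightarrow> real" where
  "g_scaled i k t = g_real i k t / real_of_int (M k)"

definition f_real :: "nat \<Rightarrow> nat \<Rightarrow> 'g \<Rightarrow> real" where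
  "f_real = to_real_mat (fmat M g)"

primrec g_scaled_pow :: "nat \<Rightarrow> nat \<Rightarrow> nat \<Rightarrow> 'g \<Rightarrow> real" where
  "g_scaled_pow 0 = id_mat"
| "g_scaled_pow (Suc j) = mat_mul_l1 n g_scaled (g_scaled_pow j)"

declare g_scaled_pow.simps(2)[simp del]

text \<open>Since f = (I - g M^-1) M, its inverse is the Neumann series M^-1 (sum over j of
  (g M^-1)^j); it converges because every column of g M^-1 has l1-norm at most col_ratio < 1.\<close>

definition neumann_term :: "nat \<Rightarrow> nat \<Rightarrow> nat \<Rightarrow> 'g \<Rightarrow> real" where
  "neumann_term j i k t = g_scaled_pow j i k t / real_of_int (M i)"

definition neumann_partial :: "nat \<Rightarrow> nat \<Rightarrow> nat \<Rightarrow> 'g \<Rightarrow> real" where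
  "neumann_partial N i k t = (\<Sum>j<N. neumann_term j i k t)"

definition neumann_inv :: "nat \<Rightarrow> nat \<Rightarrow> 'g \<Rightarrow> real" where
  "neumann_inv i k t = (if i < n \<and> k < n then (\<Sum>j. neumann_term j i k t) else 0)"

definition col_ratio :: real where
  "col_ratio = Max ((\<lambda>m. \<Sum>i<n. l1_norm (g_scaled i m)) ` {..<n})"

lemma M_pos: "k < n \<Longrightarrow> M k > 0"
proof -
  assume "k < n"
  moreover have "(\<Sum>m<n. norm1_ZG (g m k)) \<ge> 0"
    by (simp add: norm1_ZG_def sum_nonneg)
  ultimately show ?thesis using M_dominant by fastforce
qed

lemma M_ge_1: "k < n \<Longrightarrow> real_of_int (M k) \<ge> 1"
  using M_pos[of k] by simp

lemma fin_supp_g_real: "i < n \<Longrightarrow> k < n \<Longrightarrow> fin_supp (g_real i k)"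
  using g_fin by (simp add: g_real_def supp_def in_ZG_def)

lemma g_scaled_eq: "g_scaled i k = (\<lambda>t. g_real i k t / real_of_int (M k))"
  by (simp add: g_scaled_def[abs_def])

lemma fin_supp_g_scaled: "i < n \<Longrightarrow> k < n \<Longrightarrow> fin_supp (g_scaled i k)"
  by (simp add: g_scaled_eq fin_supp_div fin_supp_g_real)

lemma l1_norm_g_scaled: "k < n \<Longrightarrow> l1_norm (g_scaled i k) = norm1_ZG (g i k) / M k"
  using M_pos[of k]
  by (simp add: g_scaled_eq l1_norm_div l1_norm_def norm1_ZG_def g_real_def supp_def)

lemma col_sum_le_col_ratio: "m < n \<Longrightarrow> (\<Sum>i<n. l1_norm (g_scaled i m)) \<le> col_ratio"
  unfolding col_ratio_def by (rule Max_ge) auto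

lemma col_ratio_lt_1: "col_ratio < 1"
proof -
  have "(\<Sum>i<n. l1_norm (g_scaled i m)) < 1" if m: "m < n" for m
  proof -
    have "(\<Sum>i<n. norm1_ZG (g i m)) < M m" using M_dominant m by blast
    hence "(\<Sum>i<n. real_of_int (norm1_ZG (g i m))) < real_of_int (M m)"
      by (metis of_int_less_iff of_int_sum)
    thus ?thesis using M_pos[OF m]
      by (simp add: l1_norm_g_scaled m sum_divide_distrib[symmetric])
  qed
  thus ?thesis unfolding col_ratio_def using n_pos by (subst Max_less_iff) auto
qed

lemma col_ratio_nonneg: "col_ratio \<ge> 0"
  using sum_nonneg[OF l1_norm_nonneg] col_sum_le_col_ratio[OF n_pos] by (rule order_trans)

lemma fin_supp_mat_g_scaled: "fin_supp_mat n g_scaled"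
  by (simp add: fin_supp_mat_def fin_supp_g_scaled)

lemma fin_supp_mat_g_scaled_pow: "fin_supp_mat n (g_scaled_pow j)"
  by (induction j)
     (simp_all add: g_scaled_pow.simps(2) fin_supp_mat_mul fin_supp_mat_g_scaled fin_supp_mat_id_mat)

lemma fin_supp_g_scaled_pow: "i < n \<Longrightarrow> k < n \<Longrightarrow> fin_supp (g_scaled_pow j i k)"
  using fin_supp_mat_g_scaled_pow unfolding fin_supp_mat_def by blast

lemma neumann_term_eq: "neumann_term j i k = (\<lambda>t. g_scaled_pow j i k t / real_of_int (M i))"
  by (simp add: neumann_term_def[abs_def])

lemma fin_supp_neumann_term: "i < n \<Longrightarrow> k < n \<Longrightarrow> fin_supp (neumann_term j i k)"
  by (simp add: neumann_term_eq fin_supp_div fin_supp_g_scaled_pow)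

lemma neumann_partial_eq: "neumann_partial N i k = (\<lambda>t. \<Sum>j<N. neumann_term j i k t)"
  by (simp add: neumann_partial_def[abs_def])

lemma fin_supp_mat_neumann_partial: "fin_supp_mat n (neumann_partial N)"
  unfolding fin_supp_mat_def neumann_partial_eq by (auto intro!: fin_supp_sum fin_supp_neumann_term)

lemma f_real_eq:
  "f_real i m = (\<lambda>t. (if i = m then real_of_int (M m) * delta_e t else 0) - g_real i m t)"
  by (auto simp: f_real_def to_real_mat_def fmat_def g_real_def delta_e_def)

lemma fin_supp_f_real: "i < n \<Longrightarrow> m < n \<Longrightarrow> fin_supp (f_real i m)"
  unfolding f_real_eq by (intro fin_supp_diff fin_supp_g_real fin_supp_if_delta)

lemma fin_supp_mat_f_real: "fin_supp_mat n f_real"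
  by (simp add: fin_supp_mat_def fin_supp_f_real)

lemma col_l1_norm_g_scaled_pow_le: "k < n \<Longrightarrow> (\<Sum>i<n. l1_norm (g_scaled_pow j i k)) \<le> col_ratio ^ j"
proof (induction j)
  case 0
  have "(\<Sum>i<n. l1_norm (g_scaled_pow 0 i k)) = (\<Sum>i<n. if i = k then 1 else 0)"
    by (rule sum.cong) (auto simp: id_mat_def l1_norm_delta_e l1_norm_zero)
  thus ?case using 0 by simp
next
  case (Suc j)
  have "l1_norm (g_scaled_pow (Suc j) i k) \<le> (\<Sum>m<n. l1_norm (g_scaled i m) * l1_norm (g_scaled_pow j m k))"
    if i: "i < n" for i
  proof -
    have "l1_norm (g_scaled_pow (Suc j) i k) \<le> (\<Sum>m<n. l1_norm (conv_l1 (g_scaled i m) (g_scaled_pow j m k)))"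
      unfolding g_scaled_pow.simps mat_mul_l1_def
      by (rule l1_norm_sum_le)
         (use i Suc.prems in \<open>auto intro!: fin_supp_conv_l1 fin_supp_g_scaled_pow fin_supp_g_scaled\<close>)
    also have "\<dots> \<le> (\<Sum>m<n. l1_norm (g_scaled i m) * l1_norm (g_scaled_pow j m k))"
      by (intro sum_mono l1_norm_conv_l1_le)
         (use i Suc.prems in \<open>auto intro!: fin_supp_g_scaled_pow fin_supp_g_scaled\<close>)
    finally show ?thesis .
  qed
  hence "(\<Sum>i<n. l1_norm (g_scaled_pow (Suc j) i k))
      \<le> (\<Sum>i<n. \<Sum>m<n. l1_norm (g_scaled i m) * l1_norm (g_scaled_pow j m k))"
    by (intro sum_mono) auto
  also have "\<dots> = (\<Sum>m<n. (\<Sum>i<n. l1_norm (g_scaled i m)) * l1_norm (g_scaled_pow j m k))"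
    by (subst sum.swap) (simp add: sum_distrib_right)
  also have "\<dots> \<le> (\<Sum>m<n. col_ratio * l1_norm (g_scaled_pow j m k))"
    by (intro sum_mono mult_right_mono col_sum_le_col_ratio l1_norm_nonneg) auto
  also have "\<dots> \<le> col_ratio * col_ratio ^ j"
    by (simp add: sum_distrib_left[symmetric] mult_left_mono[OF Suc.IH[OF Suc.prems] col_ratio_nonneg])
  finally show ?case by simp
qed

lemma l1_norm_g_scaled_pow_le: "i < n \<Longrightarrow> k < n \<Longrightarrow> l1_norm (g_scaled_pow j i k) \<le> col_ratio ^ j"
  using col_l1_norm_g_scaled_pow_le[of k j] member_le_sum[of i "{..<n}" "\<lambda>i. l1_norm (g_scaled_pow j i k)"]
    l1_norm_nonneg by force

lemma abs_g_scaled_pow_le: "i < n \<Longrightarrow> k < n \<Longrightarrow> \<bar>g_scaled_pow j i k t\<bar> \<le> col_ratio ^ j"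
  using abs_le_l1_norm[OF fin_supp_g_scaled_pow] l1_norm_g_scaled_pow_le order_trans by blast

lemma l1_norm_neumann_term_le: "i < n \<Longrightarrow> k < n \<Longrightarrow> l1_norm (neumann_term j i k) \<le> col_ratio ^ j"
proof -
  assume i: "i < n" and k: "k < n"
  have "l1_norm (neumann_term j i k) = l1_norm (g_scaled_pow j i k) / real_of_int (M i)"
    using M_pos[OF i] by (simp add: neumann_term_eq l1_norm_div)
  also have "\<dots> \<le> l1_norm (g_scaled_pow j i k)"
    using M_ge_1[OF i] l1_norm_nonneg[of "g_scaled_pow j i k"]
    by (simp add: divide_le_eq mult_le_cancel_left1)
  also have "\<dots> \<le> col_ratio ^ j" by (rule l1_norm_g_scaled_pow_le[OF i k])
  finally show ?thesis .
qed

lemma abs_neumann_term_le: "i < n \<Longrightarrow> k < n \<Longrightarrow> \<bar>neumann_term j i k t\<bar> \<le> col_ratio ^ j"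
  using abs_le_l1_norm[OF fin_supp_neumann_term] l1_norm_neumann_term_le order_trans by blast

lemma summable_col_ratio_power: "summable (\<lambda>j. col_ratio ^ j)"
  using col_ratio_lt_1 col_ratio_nonneg by (intro summable_geometric) simp

lemma summable_abs_neumann_term: "i < n \<Longrightarrow> k < n \<Longrightarrow> summable (\<lambda>j. \<bar>neumann_term j i k t\<bar>)"
  by (rule summable_comparison_test[OF _ summable_col_ratio_power]) (auto intro: abs_neumann_term_le)

lemma neumann_partial_tendsto:
  assumes "i < n" "k < n"
  shows "(\<lambda>N. neumann_partial N i k t) \<longlonglongrightarrow> neumann_inv i k t"
proof -
  have "summable (\<lambda>j. neumann_term j i k t)"
    by (rule summable_rabs_cancel[OF summable_abs_neumann_term[OF assms]])
  thus ?thesis unfolding neumann_partial_def neumann_inv_def using assms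
    by (simp add: summable_LIMSEQ)
qed

lemma sum_abs_neumann_inv_le:
  assumes "finite T"
  shows "(\<Sum>t\<in>T. \<bar>neumann_inv i k t\<bar>) \<le> 1 / (1 - col_ratio)"
proof (cases "i < n \<and> k < n")
  case False
  hence "neumann_inv i k t = 0" for t by (auto simp: neumann_inv_def)
  thus ?thesis using col_ratio_lt_1 by simp
next
  case True
  hence i: "i < n" and k: "k < n" by auto
  have "(\<Sum>t\<in>T. \<bar>neumann_inv i k t\<bar>) \<le> (\<Sum>t\<in>T. \<Sum>j. \<bar>neumann_term j i k t\<bar>)"
    by (rule sum_mono) (simp add: neumann_inv_def i k summable_rabs summable_abs_neumann_term)
  also have "\<dots> = (\<Sum>j. \<Sum>t\<in>T. \<bar>neumann_term j i k t\<bar>)"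
    by (rule suminf_sum[symmetric]) (simp add: summable_abs_neumann_term i k)
  also have "\<dots> \<le> (\<Sum>j. col_ratio ^ j)"
  proof (rule suminf_le)
    show "(\<Sum>t\<in>T. \<bar>neumann_term j i k t\<bar>) \<le> col_ratio ^ j" for j
      using sum_abs_le_l1_norm[OF fin_supp_neumann_term[OF i k] assms] l1_norm_neumann_term_le[OF i k]
      by (rule order_trans)
    show "summable (\<lambda>j. \<Sum>t\<in>T. \<bar>neumann_term j i k t\<bar>)"
      by (rule summable_sum) (simp add: summable_abs_neumann_term i k)
  qed (rule summable_col_ratio_power)
  also have "\<dots> = 1 / (1 - col_ratio)"
    using col_ratio_lt_1 col_ratio_nonneg by (intro suminf_geometric) simp
  finally show ?thesis .
qed

lemma in_l1_neumann_inv: "in_l1 (neumann_inv i k)"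
  unfolding in_l1_def
  by (rule nonneg_bdd_above_summable_on[OF _ bdd_aboveI[where M="1 / (1 - col_ratio)"]])
     (auto intro: sum_abs_neumann_inv_le)

end
context diag_dominant
begin

lemma f_real_mul_neumann_term:
  assumes i: "i < n" and k: "k < n"
  shows "mat_mul_l1 n f_real (neumann_term j) i k t = g_scaled_pow j i k t - g_scaled_pow (Suc j) i k t"
proof -
  have "mat_mul_l1 n f_real (neumann_term j) i k t
      = (\<Sum>m<n. if i = m then real_of_int (M m) * neumann_term j m k t else 0)
        - (\<Sum>m<n. conv_l1 (g_real i m) (neumann_term j m k) t)"
    unfolding mat_mul_l1_def sum_subtractf[symmetric]
    by (intro sum.cong refl)
       (simp add: f_real_eq conv_l1_diff_left fin_supp_neumann_term k conv_l1_if_delta_left)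
  also have "(\<Sum>m<n. if i = m then real_of_int (M m) * neumann_term j m k t else 0) = g_scaled_pow j i k t"
    using i M_pos[OF i] by (simp add: neumann_term_def)
  also have "(\<Sum>m<n. conv_l1 (g_real i m) (neumann_term j m k) t) = g_scaled_pow (Suc j) i k t"
    by (simp add: g_scaled_pow.simps(2) mat_mul_l1_def g_scaled_eq neumann_term_eq
        conv_l1_div_right conv_l1_div_left fin_supp_g_scaled_pow fin_supp_g_real k i)
  finally show ?thesis .
qed

lemma f_real_mul_neumann_partial:
  assumes i: "i < n" and k: "k < n"
  shows "mat_mul_l1 n f_real (neumann_partial N) i k = (\<lambda>t. id_mat i k t - g_scaled_pow N i k t)"
proof
  fix t
  have "mat_mul_l1 n f_real (neumann_partial N) i k t = (\<Sum>j<N. mat_mul_l1 n f_real (neumann_term j) i k t)"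
    unfolding mat_mul_l1_def neumann_partial_eq
    by (subst sum.swap, intro sum.cong refl conv_l1_sum_right) (auto intro: fin_supp_neumann_term k)
  also have "\<dots> = id_mat i k t - g_scaled_pow N i k t"
    using sum_lessThan_telescope'[of "\<lambda>j. g_scaled_pow j i k t" N]
    by (simp add: f_real_mul_neumann_term i k)
  finally show "mat_mul_l1 n f_real (neumann_partial N) i k t = id_mat i k t - g_scaled_pow N i k t" .
qed

lemma g_scaled_pow_tendsto_0: "i < n \<Longrightarrow> k < n \<Longrightarrow> (\<lambda>N. g_scaled_pow N i k t) \<longlonglongrightarrow> 0"
  by (rule Lim_null_comparison[where g="\<lambda>N. col_ratio ^ N"])
     (use col_ratio_lt_1 col_ratio_nonneg abs_g_scaled_pow_le in \<open>auto intro!: LIMSEQ_power_zero\<close>)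

lemma f_real_mul_neumann_inv:
  assumes i: "i < n" and k: "k < n"
  shows "mat_mul_l1 n f_real neumann_inv i k t = id_mat i k t"
proof -
  have "(\<lambda>N. mat_mul_l1 n f_real (neumann_partial N) i k t) \<longlonglongrightarrow> mat_mul_l1 n f_real neumann_inv i k t"
    by (rule tendsto_mat_mul_l1_right) (auto intro: fin_supp_f_real i neumann_partial_tendsto k)
  moreover have "(\<lambda>N. mat_mul_l1 n f_real (neumann_partial N) i k t) \<longlonglongrightarrow> id_mat i k t - 0"
    unfolding f_real_mul_neumann_partial[OF i k] by (intro tendsto_intros g_scaled_pow_tendsto_0 i k)
  ultimately show ?thesis using LIMSEQ_unique by fastforce
qed

lemma g_scaled_pow_Suc':
  "i < n \<Longrightarrow> k < n \<Longrightarrow> g_scaled_pow (Suc j) i k = mat_mul_l1 n (g_scaled_pow j) g_scaled i k"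
proof (induction j arbitrary: i k)
  case 0
  thus ?case by (simp add: g_scaled_pow.simps(2) mat_mul_l1_id_mat_right mat_mul_l1_id_mat_left)
next
  case (Suc j)
  have "g_scaled_pow (Suc (Suc j)) i k = mat_mul_l1 n g_scaled (mat_mul_l1 n (g_scaled_pow j) g_scaled) i k"
    unfolding g_scaled_pow.simps(2)[of "Suc j"] using Suc by (intro mat_mul_l1_cong) auto
  also have "\<dots> = mat_mul_l1 n (mat_mul_l1 n g_scaled (g_scaled_pow j)) g_scaled i k"
    by (rule ext, rule mat_mul_l1_assoc_fin23[symmetric])
       (auto intro: fin_supp_mat_g_scaled_pow fin_supp_mat_g_scaled Suc.prems)
  finally show ?case by (simp add: g_scaled_pow.simps(2))
qed

lemma neumann_term_mul_f_real:
  assumes i: "i < n" and k: "k < n"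
  shows "mat_mul_l1 n (neumann_term j) f_real i k t
    = real_of_int (M k) / real_of_int (M i) * (g_scaled_pow j i k t - g_scaled_pow (Suc j) i k t)"
proof -
  have "mat_mul_l1 n (neumann_term j) f_real i k t
      = (\<Sum>m<n. if m = k then real_of_int (M k) * neumann_term j i m t else 0)
        - (\<Sum>m<n. conv_l1 (neumann_term j i m) (g_real m k) t)"
    unfolding mat_mul_l1_def sum_subtractf[symmetric]
    by (intro sum.cong refl)
       (simp add: f_real_eq conv_l1_diff_right fin_supp_if_delta fin_supp_g_real k conv_l1_if_delta_right)
  also have "(\<Sum>m<n. if m = k then real_of_int (M k) * neumann_term j i m t else 0)
      = real_of_int (M k) * g_scaled_pow j i k t / real_of_int (M i)"
    using k by (simp add: neumann_term_def)
  also have "(\<Sum>m<n. conv_l1 (neumann_term j i m) (g_real m k) t)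
      = real_of_int (M k) * g_scaled_pow (Suc j) i k t / real_of_int (M i)"
  proof -
    have "g_scaled_pow (Suc j) i k t = (\<Sum>m<n. conv_l1 (g_scaled_pow j i m) (g_real m k) t) / real_of_int (M k)"
      unfolding g_scaled_pow_Suc'[OF i k] mat_mul_l1_def
      by (simp add: g_scaled_eq conv_l1_div_right fin_supp_g_real k sum_divide_distrib)
    moreover have "(\<Sum>m<n. conv_l1 (neumann_term j i m) (g_real m k) t)
        = (\<Sum>m<n. conv_l1 (g_scaled_pow j i m) (g_real m k) t) / real_of_int (M i)"
      by (simp add: neumann_term_eq conv_l1_div_left fin_supp_g_real k sum_divide_distrib)
    ultimately show ?thesis using M_pos[OF k] by simp
  qed
  finally show ?thesis by (simp add: right_diff_distrib)
qed

lemma neumann_partial_mul_f_real: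
  assumes i: "i < n" and k: "k < n"
  shows "mat_mul_l1 n (neumann_partial N) f_real i k t
    = id_mat i k t - real_of_int (M k) / real_of_int (M i) * g_scaled_pow N i k t"
proof -
  have "mat_mul_l1 n (neumann_partial N) f_real i k t = (\<Sum>j<N. mat_mul_l1 n (neumann_term j) f_real i k t)"
    unfolding mat_mul_l1_def neumann_partial_eq
    by (subst sum.swap, intro sum.cong refl conv_l1_sum_left) (auto intro: fin_supp_f_real k)
  also have "\<dots> = real_of_int (M k) / real_of_int (M i) * (id_mat i k t - g_scaled_pow N i k t)"
    using sum_lessThan_telescope'[of "\<lambda>j. g_scaled_pow j i k t" N]
    by (simp add: neumann_term_mul_f_real i k sum_distrib_left[symmetric] sum_divide_distrib[symmetric])
  also have "\<dots> = id_mat i k t - real_of_int (M k) / real_of_int (M i) * g_scaled_pow N i k t"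
    by (cases "i = k") (use M_pos[OF i] in \<open>auto simp: id_mat_def right_diff_distrib\<close>)
  finally show ?thesis .
qed

lemma neumann_inv_mul_f_real:
  assumes i: "i < n" and k: "k < n"
  shows "mat_mul_l1 n neumann_inv f_real i k t = id_mat i k t"
proof -
  have "(\<lambda>N. mat_mul_l1 n (neumann_partial N) f_real i k t) \<longlonglongrightarrow> mat_mul_l1 n neumann_inv f_real i k t"
    by (rule tendsto_mat_mul_l1_left) (auto intro: fin_supp_f_real k neumann_partial_tendsto i)
  moreover have "(\<lambda>N. mat_mul_l1 n (neumann_partial N) f_real i k t)
      \<longlonglongrightarrow> id_mat i k t - real_of_int (M k) / real_of_int (M i) * 0"
    unfolding neumann_partial_mul_f_real[OF i k] by (intro tendsto_intros g_scaled_pow_tendsto_0 i k)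
  ultimately show ?thesis using LIMSEQ_unique by fastforce
qed

lemma neumann_partial_eq_left_inverse:
  assumes inv: "\<forall>i<n. \<forall>k<n. mat_mul_l1 n F f_real i k = id_mat i k" and i: "i < n" and k: "k < n"
  shows "neumann_partial N i k t = F i k t - (\<Sum>m<n. conv_l1 (F i m) (g_scaled_pow N m k) t)"
proof -
  have "mat_mul_l1 n (mat_mul_l1 n F f_real) (neumann_partial N) i k
      = mat_mul_l1 n id_mat (neumann_partial N) i k"
    by (rule mat_mul_l1_cong) (use inv i in auto)
  hence left: "mat_mul_l1 n (mat_mul_l1 n F f_real) (neumann_partial N) i k t = neumann_partial N i k t"
    by (simp add: mat_mul_l1_id_mat_left[OF i])
  have cong: "mat_mul_l1 n F (mat_mul_l1 n f_real (neumann_partial N)) i k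
      = mat_mul_l1 n F (\<lambda>m k t. id_mat m k t - g_scaled_pow N m k t) i k"
    by (rule mat_mul_l1_cong) (auto simp: f_real_mul_neumann_partial k)
  have "mat_mul_l1 n F (mat_mul_l1 n f_real (neumann_partial N)) i k t
      = (\<Sum>m<n. conv_l1 (F i m) (\<lambda>t. id_mat m k t - g_scaled_pow N m k t) t)"
    unfolding cong by (simp add: mat_mul_l1_def)
  also have "\<dots> = (\<Sum>m<n. conv_l1 (F i m) (id_mat m k) t)
      - (\<Sum>m<n. conv_l1 (F i m) (g_scaled_pow N m k) t)"
    unfolding sum_subtractf[symmetric]
    by (rule sum.cong[OF refl], rule conv_l1_diff_right) (auto intro: fin_supp_id_mat fin_supp_g_scaled_pow k)
  also have "(\<Sum>m<n. conv_l1 (F i m) (id_mat m k) t) = F i k t"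
    using mat_mul_l1_id_mat_right[OF k, of F i] unfolding mat_mul_l1_def by metis
  finally have right: "mat_mul_l1 n F (mat_mul_l1 n f_real (neumann_partial N)) i k t
      = F i k t - (\<Sum>m<n. conv_l1 (F i m) (g_scaled_pow N m k) t)" .
  have "mat_mul_l1 n (mat_mul_l1 n F f_real) (neumann_partial N) i k t
      = mat_mul_l1 n F (mat_mul_l1 n f_real (neumann_partial N)) i k t"
    by (rule mat_mul_l1_assoc_fin23) (auto intro: fin_supp_mat_f_real fin_supp_mat_neumann_partial k)
  thus ?thesis unfolding left right .
qed

lemma conv_l1_g_scaled_pow_tendsto_0:
  assumes bound: "\<And>m u. m < n \<Longrightarrow> \<bar>F i m u\<bar> \<le> C" and k: "k < n"
  shows "(\<lambda>N. \<Sum>m<n. conv_l1 (F i m) (g_scaled_pow N m k) t) \<longlonglongrightarrow> 0"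
proof (rule Lim_null_comparison[where g="\<lambda>N. C * col_ratio ^ N"])
  have C_nonneg: "C \<ge> 0" using bound[OF n_pos] by (meson abs_ge_zero order_trans)
  have "norm (\<Sum>m<n. conv_l1 (F i m) (g_scaled_pow N m k) t) \<le> C * col_ratio ^ N" for N
  proof -
    have "norm (\<Sum>m<n. conv_l1 (F i m) (g_scaled_pow N m k) t)
        \<le> (\<Sum>m<n. C * l1_norm (g_scaled_pow N m k))"
      unfolding real_norm_def
      by (rule order_trans[OF sum_abs], intro sum_mono abs_conv_l1_le bound fin_supp_g_scaled_pow k)
         auto
    also have "\<dots> \<le> C * col_ratio ^ N"
      by (simp add: sum_distrib_left[symmetric] mult_left_mono col_l1_norm_g_scaled_pow_le k C_nonneg)
    finally show ?thesis .
  qed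
  thus "\<forall>\<^sub>F N in sequentially. norm (\<Sum>m<n. conv_l1 (F i m) (g_scaled_pow N m k) t) \<le> C * col_ratio ^ N"
    by simp
  show "(\<lambda>N. C * col_ratio ^ N) \<longlonglongrightarrow> 0"
    using col_ratio_lt_1 col_ratio_nonneg by (auto intro!: tendsto_mult_right_zero LIMSEQ_power_zero)
qed

text \<open>Only a left inverse with l1 entries is needed: multiplying F f = I on the right by a
  partial Neumann sum S_N gives S_N = F - F (g M^-1)^N, and the error term vanishes since
  the entries of F are bounded.\<close>

lemma left_inverse_unique:
  assumes zero: "\<forall>i j. (n \<le> i \<or> n \<le> j) \<longrightarrow> F i j = (\<lambda>_. 0)"
    and l1: "\<forall>i<n. \<forall>j<n. in_l1 (F i j)"
    and inv: "\<forall>i<n. \<forall>k<n. mat_mul_l1 n F f_real i k = id_mat i k"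
  shows "F = neumann_inv"
proof (intro ext)
  fix i k t
  show "F i k t = neumann_inv i k t"
  proof (cases "i < n \<and> k < n")
    case False
    thus ?thesis using zero by (auto simp: neumann_inv_def)
  next
    case True
    hence i: "i < n" and k: "k < n" by auto
    define C where "C = (\<Sum>m<n. \<Sum>\<^sub>\<infinity>s. \<bar>F i m s\<bar>)"
    have "\<bar>F i m u\<bar> \<le> C" if m: "m < n" for m u
    proof -
      have "\<bar>F i m u\<bar> \<le> (\<Sum>\<^sub>\<infinity>s. \<bar>F i m s\<bar>)"
        using l1 i m by (blast intro: abs_le_infsum_abs)
      also have "\<dots> \<le> C"
        unfolding C_def by (rule member_le_sum) (auto intro: infsum_nonneg m)
      finally show ?thesis .
    qed
    hence "(\<lambda>N. neumann_partial N i k t) \<longlonglongrightarrow> F i k t - 0"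
      unfolding neumann_partial_eq_left_inverse[OF inv i k]
      by (intro tendsto_intros conv_l1_g_scaled_pow_tendsto_0 k)
    from LIMSEQ_unique[OF neumann_partial_tendsto[OF i k] this] show ?thesis by simp
  qed
qed

lemma inv_l1_f_real: "inv_l1 n f_real = neumann_inv"
  unfolding inv_l1_def
proof (rule the_equality)
  show "(\<forall>i j. n \<le> i \<or> n \<le> j \<longrightarrow> neumann_inv i j = (\<lambda>_. 0)) \<and>
    (\<forall>i<n. \<forall>j<n. in_l1 (neumann_inv i j)) \<and>
    (\<forall>i<n. \<forall>k<n. mat_mul_l1 n neumann_inv f_real i k = (if i = k then delta_e else (\<lambda>_. 0))) \<and>
    (\<forall>i<n. \<forall>k<n. mat_mul_l1 n f_real neumann_inv i k = (if i = k then delta_e else (\<lambda>_. 0)))"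
    using neumann_inv_mul_f_real f_real_mul_neumann_inv in_l1_neumann_inv
    by (auto simp: neumann_inv_def id_mat_def fun_eq_iff)
next
  fix F assume "(\<forall>i j. n \<le> i \<or> n \<le> j \<longrightarrow> F i j = (\<lambda>_. 0)) \<and>
    (\<forall>i<n. \<forall>j<n. in_l1 (F i j)) \<and>
    (\<forall>i<n. \<forall>k<n. mat_mul_l1 n F f_real i k = (if i = k then delta_e else (\<lambda>_. 0))) \<and>
    (\<forall>i<n. \<forall>k<n. mat_mul_l1 n f_real F i k = (if i = k then delta_e else (\<lambda>_. 0)))"
  thus "F = neumann_inv" by (intro left_inverse_unique) (auto simp: id_mat_def)
qed

end

section \<open>The solution x = h f^-1\<close>

lemma vec_mat_l1_eq_mat_mul_l1: "vec_mat_l1 n a F m = mat_mul_l1 n (\<lambda>_. a) F i m"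
  by (simp add: vec_mat_l1_def mat_mul_l1_def)

lemma finite_level_set_if_sums_bounded:
  fixes a :: "'g \<Rightarrow> real"
  assumes bounded: "\<And>T. finite T \<Longrightarrow> (\<Sum>t\<in>T. \<bar>a t\<bar>) \<le> B" and c: "c > 0"
  shows "finite {t. c \<le> \<bar>a t\<bar>}"
proof (rule ccontr)
  assume "infinite {t. c \<le> \<bar>a t\<bar>}"
  moreover obtain N :: nat where N: "real N * c > B"
    using reals_Archimedean3[OF c] by blast
  ultimately obtain T where T: "T \<subseteq> {t. c \<le> \<bar>a t\<bar>}" "finite T" "card T = N"
    using infinite_arbitrarily_large by blast
  have "real N * c = (\<Sum>t\<in>T. c)" using T by simp
  also have "\<dots> \<le> (\<Sum>t\<in>T. \<bar>a t\<bar>)" by (rule sum_mono) (use T in auto)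
  also have "\<dots> \<le> B" by (rule bounded[OF T(2)])
  finally show False using N by simp
qed

locale diag_dominant_row = diag_dominant n M g for n M and g :: "nat \<Rightarrow> nat \<Rightarrow> 'g::group_add \<Rightarrow> int" +
  fixes h :: "nat \<Rightarrow> 'g \<Rightarrow> int"
  assumes h_fin: "\<forall>k<n. in_ZG (h k)"
begin

definition h_real :: "nat \<Rightarrow> 'g \<Rightarrow> real" where
  "h_real k t = real_of_int (h k t)"

definition x :: "nat \<Rightarrow> 'g \<Rightarrow> real" where
  "x = vec_mat_l1 n h_real neumann_inv"

lemma fin_supp_h_real: "k < n \<Longrightarrow> fin_supp (h_real k)"
  using h_fin by (simp add: h_real_def supp_def in_ZG_def)

lemma x_mul_f_real: "k < n \<Longrightarrow> vec_mat_l1 n x f_real k = h_real k"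
proof -
  assume k: "k < n"
  have "(\<lambda>_::nat. x) = mat_mul_l1 n (\<lambda>_. h_real) neumann_inv"
    by (intro ext) (simp add: x_def vec_mat_l1_eq_mat_mul_l1[where i=0] mat_mul_l1_def)
  hence "vec_mat_l1 n x f_real k = mat_mul_l1 n (mat_mul_l1 n (\<lambda>_. h_real) neumann_inv) f_real 0 k"
    by (simp add: vec_mat_l1_eq_mat_mul_l1[where i=0])
  also have "\<dots> = mat_mul_l1 n (\<lambda>_. h_real) (mat_mul_l1 n neumann_inv f_real) 0 k"
    by (rule ext, rule mat_mul_l1_assoc_fin13) (auto intro: fin_supp_h_real fin_supp_mat_f_real k)
  also have "\<dots> = mat_mul_l1 n (\<lambda>_. h_real) id_mat 0 k"
    by (rule mat_mul_l1_cong) (auto simp: neumann_inv_mul_f_real k fun_eq_iff)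
  also have "\<dots> = h_real k" by (rule mat_mul_l1_id_mat_right[OF k])
  finally show ?thesis .
qed

lemma sum_abs_x_le:
  assumes T: "finite T"
  shows "(\<Sum>t\<in>T. \<bar>x k t\<bar>) \<le> 1 / (1 - col_ratio) * (\<Sum>j<n. l1_norm (h_real j))"
proof -
  have translate: "(\<Sum>t\<in>T. \<bar>neumann_inv j k (- u + t)\<bar>) \<le> 1 / (1 - col_ratio)" for j u
  proof -
    have inj: "inj_on (\<lambda>t. - u + t) T" by (auto intro: inj_onI)
    have "(\<Sum>t\<in>T. \<bar>neumann_inv j k (- u + t)\<bar>) = (\<Sum>v\<in>(\<lambda>t. - u + t) ` T. \<bar>neumann_inv j k v\<bar>)"
      by (simp add: sum.reindex[OF inj])
    also have "\<dots> \<le> 1 / (1 - col_ratio)" by (rule sum_abs_neumann_inv_le) (use T in auto)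
    finally show ?thesis .
  qed
  have "(\<Sum>t\<in>T. \<bar>x k t\<bar>)
      \<le> (\<Sum>t\<in>T. \<Sum>j<n. \<Sum>u\<in>supp (h_real j). \<bar>h_real j u\<bar> * \<bar>neumann_inv j k (- u + t)\<bar>)"
  proof (rule sum_mono)
    fix t
    have "x k t = (\<Sum>j<n. \<Sum>u\<in>supp (h_real j). h_real j u * neumann_inv j k (- u + t))"
      unfolding x_def vec_mat_l1_def
      by (rule sum.cong[OF refl], rule conv_l1_eq_sum_left[OF fin_supp_h_real order_refl]) simp
    hence "\<bar>x k t\<bar> = \<bar>\<Sum>j<n. \<Sum>u\<in>supp (h_real j). h_real j u * neumann_inv j k (- u + t)\<bar>"
      by simp
    also have "\<dots> \<le> (\<Sum>j<n. \<Sum>u\<in>supp (h_real j). \<bar>h_real j u\<bar> * \<bar>neumann_inv j k (- u + t)\<bar>)"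
      by (rule order_trans[OF sum_abs], rule sum_mono, rule order_trans[OF sum_abs]) (simp add: abs_mult)
    finally show "\<bar>x k t\<bar> \<le> \<dots>" .
  qed
  also have "\<dots> = (\<Sum>j<n. \<Sum>u\<in>supp (h_real j). \<bar>h_real j u\<bar> * (\<Sum>t\<in>T. \<bar>neumann_inv j k (- u + t)\<bar>))"
    by (simp add: sum_distrib_left sum.swap[of _ T])
  also have "\<dots> \<le> (\<Sum>j<n. \<Sum>u\<in>supp (h_real j). \<bar>h_real j u\<bar> * (1 / (1 - col_ratio)))"
    by (intro sum_mono mult_left_mono translate) auto
  also have "\<dots> = 1 / (1 - col_ratio) * (\<Sum>j<n. l1_norm (h_real j))"
    by (simp add: l1_norm_def sum_distrib_left sum_distrib_right mult.commute)
  finally show ?thesis .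
qed

lemma finite_level_set_x: "c > 0 \<Longrightarrow> finite {t. c \<le> \<bar>x k t\<bar>}"
  by (rule finite_level_set_if_sums_bounded[OF sum_abs_x_le])

end

section \<open>Distance to the integers and descent\<close>

definition dist_int :: "real \<Rightarrow> real" where
  "dist_int y = \<bar>y - of_int (round y)\<bar>"

lemma dist_int_le: "dist_int y \<le> \<bar>y - of_int m\<bar>"
  unfolding dist_int_def by (rule round_diff_minimal)

lemma dist_int_nonneg: "dist_int y \<ge> 0"
  by (simp add: dist_int_def)

lemma dist_int_le_abs: "dist_int y \<le> \<bar>y\<bar>"
  using dist_int_le[of y 0] by simp

lemma dist_int_pos_iff: "dist_int y > 0 \<longleftrightarrow> y \<notin> \<int>"
proof -
  have "dist_int y = 0 \<longleftrightarrow> y = of_int (round y)" by (simp add: dist_int_def)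
  also have "\<dots> \<longleftrightarrow> y \<in> \<int>" by (metis Ints_cases Ints_of_int round_of_int)
  finally show ?thesis by (simp add: dist_int_def)
qed

lemma dist_int_int_comb:
  assumes "finite I"
  shows "dist_int (of_int m + (\<Sum>i\<in>I. of_int (c i) * z i)) \<le> (\<Sum>i\<in>I. \<bar>of_int (c i)\<bar> * dist_int (z i))"
proof -
  let ?r = "m + (\<Sum>i\<in>I. c i * round (z i))"
  have "dist_int (of_int m + (\<Sum>i\<in>I. of_int (c i) * z i))
      \<le> \<bar>of_int m + (\<Sum>i\<in>I. of_int (c i) * z i) - of_int ?r\<bar>"
    by (rule dist_int_le)
  also have "of_int m + (\<Sum>i\<in>I. of_int (c i) * z i) - of_int ?r
      = (\<Sum>i\<in>I. of_int (c i) * (z i - of_int (round (z i))))"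
    by (simp add: sum_subtractf right_diff_distrib)
  also have "\<bar>\<dots>\<bar> \<le> (\<Sum>i\<in>I. \<bar>of_int (c i)\<bar> * dist_int (z i))"
    by (rule order_trans[OF sum_abs]) (simp add: abs_mult dist_int_def)
  finally show ?thesis .
qed

text \<open>M y lies within M dist_int y \<le> 1/2 of the integer M round y, so no integer is closer.\<close>

lemma dist_int_mult:
  fixes M :: int
  assumes M: "M \<ge> 1" and small: "dist_int y \<le> 1 / (2 * of_int M)"
  shows "of_int M * dist_int y \<le> dist_int (of_int M * y)"
proof -
  define e where "e = y - of_int (round y)"
  define z where "z = M * round y - round (of_int M * y)"
  have Me: "\<bar>of_int M * e\<bar> = of_int M * dist_int y"
    using M by (simp add: abs_mult dist_int_def e_def)
  have "of_int M * dist_int y \<le> 1 / 2"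
    using small M by (simp add: field_simps)
  moreover have "dist_int (of_int M * y) = \<bar>of_int M * e + of_int z\<bar>"
    by (simp add: dist_int_def e_def z_def algebra_simps)
  ultimately show ?thesis
    using Me by (cases "z = 0") (simp, linarith)
qed

lemma dist_int_int_comb_le:
  fixes c :: "'a \<Rightarrow> int" and K :: int
  assumes fin: "finite I" and weight: "(\<Sum>j\<in>I. \<bar>c j\<bar>) \<le> K"
    and le_D: "\<And>j. j \<in> I \<Longrightarrow> dist_int (z j) \<le> D" and D: "D \<ge> 0"
  shows "dist_int (of_int m + (\<Sum>j\<in>I. of_int (c j) * z j)) \<le> of_int K * D"
proof -
  have "dist_int (of_int m + (\<Sum>j\<in>I. of_int (c j) * z j)) \<le> (\<Sum>j\<in>I. \<bar>of_int (c j)\<bar> * dist_int (z j))"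
    by (rule dist_int_int_comb[OF fin])
  also have "\<dots> \<le> (\<Sum>j\<in>I. \<bar>of_int (c j)\<bar> * D)"
    by (intro sum_mono mult_left_mono le_D) auto
  also have "\<dots> = of_int (\<Sum>j\<in>I. \<bar>c j\<bar>) * D"
    by (simp add: sum_distrib_right)
  also have "\<dots> \<le> of_int K * D"
    using weight by (intro mult_right_mono[OF _ D]) (simp only: of_int_le_iff)
  finally show ?thesis .
qed

text \<open>Take a summand z i farthest from the integers: the distance of M y to the integers is at
  most (M - 1) dist_int (z i), whereas it equals M dist_int y when dist_int y is small.\<close>

lemma exists_summand_not_Ints:
  fixes M m :: int and c :: "'a \<Rightarrow> int" and z :: "'a \<Rightarrow> real"
  assumes fin: "finite I" and weight: "(\<Sum>i\<in>I. \<bar>c i\<bar>) \<le> M - 1"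
    and eq: "of_int M * y = of_int m + (\<Sum>i\<in>I. of_int (c i) * z i)"
    and not_int: "of_int M * y \<notin> \<int>"
  shows "\<exists>i\<in>I. z i \<notin> \<int> \<and> (dist_int y \<le> 1 / (2 * of_int M) \<longrightarrow> dist_int y \<le> dist_int (z i))"
proof -
  have "(\<Sum>i\<in>I. \<bar>c i\<bar>) \<ge> 0" by (simp add: sum_nonneg)
  hence M: "M \<ge> 1" using weight by linarith
  have "I \<noteq> {}"
  proof
    assume "I = {}"
    with eq not_int show False by simp
  qed
  define D where "D = Max ((\<lambda>j. dist_int (z j)) ` I)"
  have "D \<in> (\<lambda>j. dist_int (z j)) ` I" unfolding D_def using fin \<open>I \<noteq> {}\<close> by (intro Max_in) auto
  then obtain i where i: "i \<in> I" and Di: "D = dist_int (z i)" by blast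
  have max: "dist_int (z j) \<le> dist_int (z i)" if "j \<in> I" for j
    unfolding Di[symmetric] D_def using fin that by (intro Max_ge) auto
  have "dist_int (of_int M * y) \<le> of_int (M - 1) * dist_int (z i)"
    unfolding eq using fin weight max dist_int_nonneg by (rule dist_int_int_comb_le)
  hence bound: "dist_int (of_int M * y) \<le> (of_int M - 1) * dist_int (z i)" by simp
  have "(of_int M - 1) * dist_int (z i) > 0"
    using bound not_int by (simp add: dist_int_pos_iff[symmetric])
  hence "z i \<notin> \<int>"
    using M by (simp add: zero_less_mult_iff flip: dist_int_pos_iff)
  moreover have "dist_int y \<le> dist_int (z i)" if small: "dist_int y \<le> 1 / (2 * of_int M)"
  proof (rule ccontr)
    assume "\<not> ?thesis"
    hence "(of_int M - 1) * dist_int (z i) \<le> (of_int M - 1) * dist_int y"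
      using M by (intro mult_left_mono) auto
    with dist_int_mult[OF M small] bound
    have "of_int M * dist_int y \<le> (of_int M - 1) * dist_int y" by linarith
    hence "dist_int y \<le> 0" by (simp add: algebra_simps)
    moreover have "y \<notin> \<int>" using not_int by auto
    ultimately show False by (simp add: dist_int_pos_iff[symmetric])
  qed
  ultimately show ?thesis using i by blast
qed

lemma Ints_if_mult_Ints:
  fixes M :: int and y :: real
  assumes M: "M > 0" and int: "of_int M * y \<in> \<int>"
    and no_fraction: "\<And>j. 1 \<le> j \<Longrightarrow> j \<le> M - 1 \<Longrightarrow> y - of_int j / of_int M \<notin> \<int>"
  shows "y \<in> \<int>"
proof -
  obtain N where N: "of_int M * y = of_int N" using int by (auto elim: Ints_cases)
  have split: "y - of_int (N mod M) / of_int M = of_int (N div M)"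
  proof -
    have "of_int N = of_int M * of_int (N div M) + (of_int (N mod M) :: real)"
      by (metis mult_div_mod_eq of_int_add of_int_mult)
    thus ?thesis using N M by (simp add: field_simps)
  qed
  have "N mod M = 0"
  proof (rule ccontr)
    assume "N mod M \<noteq> 0"
    moreover have "0 \<le> N mod M" "N mod M < M" using M by simp_all
    ultimately show False using no_fraction[of "N mod M"] split by simp
  qed
  thus ?thesis using split by simp
qed

lemma inj_if_subsemigroup_descent:
  fixes u :: "nat \<Rightarrow> 'g::group_add"
  assumes P_add: "\<forall>x\<in>P. \<forall>y\<in>P. x + y \<in> P" and P_0: "0 \<notin> P"
    and step: "\<And>i. \<exists>s\<in>P. u (Suc i) = u i - s"
  shows "inj u"
proof -
  have gap: "\<exists>p\<in>P. u i = u (i + Suc l) + p" for i l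
  proof (induction l)
    case 0
    obtain s where "s \<in> P" "u (Suc i) = u i - s" using step by blast
    thus ?case by (intro bexI[of _ s]) simp_all
  next
    case (Suc l)
    then obtain p where p: "p \<in> P" "u i = u (i + Suc l) + p" by blast
    obtain s where s: "s \<in> P" "u (Suc (i + Suc l)) = u (i + Suc l) - s" using step by blast
    have "u i = u (i + Suc (Suc l)) + (s + p)"
      using p(2) s(2) by (simp add: add.assoc[symmetric])
    moreover have "s + p \<in> P" using P_add s(1) p(1) by blast
    ultimately show ?case by blast
  qed
  have neq: "u i \<noteq> u j" if "i < j" for i j
  proof
    assume eq: "u i = u j"
    obtain l where "j = Suc (i + l)" using less_imp_Suc_add[OF \<open>i < j\<close>] by blast
    hence "j = i + Suc l" by simp
    then obtain p where p: "p \<in> P" "u i = u j + p" using gap by blast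
    have "u j + 0 = u j + p" using eq p(2) by simp
    hence "p = 0" by (simp only: add_left_cancel)
    with p(1) P_0 show False by simp
  qed
  show ?thesis
  proof (rule injI)
    fix i j assume "u i = u j"
    thus "i = j" using neq[of i j] neq[of j i] by (cases i j rule: linorder_cases) auto
  qed
qed

text \<open>Following successors from any point of N gives an injective sequence, since positions
  strictly descend in the order induced by P. Beyond the finitely many points with
  d > eps the distance d never decreases, so infinitely many points lie in one level set.\<close>

lemma empty_if_subsemigroup_descent:
  fixes pos :: "'a \<Rightarrow> 'g::group_add" and d :: "'a \<Rightarrow> real"
  assumes P_add: "\<forall>x\<in>P. \<forall>y\<in>P. x + y \<in> P" and P_0: "0 \<notin> P"
    and d_pos: "\<And>p. p \<in> N \<Longrightarrow> d p > 0"
    and level: "\<And>c. c > 0 \<Longrightarrow> finite {p \<in> N. c \<le> d p}"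
    and eps: "eps > 0"
    and succ: "\<And>p. p \<in> N \<Longrightarrow> \<exists>p'\<in>N. (\<exists>s\<in>P. pos p' = pos p - s) \<and> (d p \<le> eps \<longrightarrow> d p \<le> d p')"
  shows "N = {}"
proof (rule ccontr)
  assume "N \<noteq> {}"
  then obtain p0 where p0: "p0 \<in> N" by blast
  from succ obtain next_pt where next_pt: "\<And>p. p \<in> N \<Longrightarrow> next_pt p \<in> N \<and>
      (\<exists>s\<in>P. pos (next_pt p) = pos p - s) \<and> (d p \<le> eps \<longrightarrow> d p \<le> d (next_pt p))"
    by metis
  define u where "u i = (next_pt ^^ i) p0" for i
  have u_Suc: "u (Suc i) = next_pt (u i)" for i by (simp add: u_def)
  have u_in: "u i \<in> N" for i by (induction i) (simp_all add: u_def p0 next_pt)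
  have "inj (pos \<circ> u)"
    using P_add P_0
  proof (rule inj_if_subsemigroup_descent)
    show "\<exists>s\<in>P. (pos \<circ> u) (Suc i) = (pos \<circ> u) i - s" for i
      using next_pt[OF u_in[of i]] by (simp add: u_Suc)
  qed
  hence inj_u: "inj u" by (rule inj_on_imageI2)
  have "finite (u -` {p \<in> N. eps \<le> d p})"
    using level[OF eps] inj_u by (rule finite_vimageI)
  then obtain i0 where i0: "\<And>i. eps \<le> d (u i) \<Longrightarrow> i < i0"
    by (auto simp: finite_nat_set_iff_bounded u_in)
  have mono: "d (u i0) \<le> d (u i)" if "i0 \<le> i" for i
    using that
  proof (induction i rule: dec_induct)
    case (step i)
    have "\<not> eps \<le> d (u i)" using i0[of i] step.hyps(1) by linarith
    hence "d (u i) \<le> d (u (Suc i))" using next_pt[OF u_in[of i]] by (simp add: u_Suc)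
    with step.IH show ?case by linarith
  qed simp
  have "u ` {i0..} \<subseteq> {p \<in> N. d (u i0) \<le> d p}" using mono u_in by auto
  hence "finite (u ` {i0..})" using level[OF d_pos[OF u_in]] finite_subset by blast
  hence "finite {i0..}" using finite_imageD inj_on_subset[OF inj_u] by blast
  thus False using infinite_Ici by blast
qed

context diag_dominant_row
begin

lemma x_recurrence:
  assumes k: "k < n"
  shows "real_of_int (M k) * x k t = real_of_int (h k t)
    + (\<Sum>p\<in>Sigma {..<n} (\<lambda>m. supp (g m k)). real_of_int (g (fst p) k (snd p)) * x (fst p) (t - snd p))"
proof -
  have conv: "conv_l1 (x m) (f_real m k) t = (if m = k then real_of_int (M k) * x m t else 0)
      - (\<Sum>s\<in>supp (g m k). real_of_int (g m k s) * x m (t - s))" if m: "m < n" for m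
  proof -
    have "conv_l1 (x m) (f_real m k) t
        = conv_l1 (x m) (\<lambda>t. if m = k then real_of_int (M k) * delta_e t else 0) t
          - conv_l1 (x m) (g_real m k) t"
      unfolding f_real_eq by (rule conv_l1_diff_right[OF fin_supp_if_delta fin_supp_g_real[OF m k]])
    also have "conv_l1 (x m) (g_real m k) t = (\<Sum>s\<in>supp (g m k). x m (t - s) * g_real m k s)"
      by (rule conv_l1_eq_sum_right) (use g_fin m k in \<open>auto simp: in_ZG_def supp_def g_real_def\<close>)
    finally show ?thesis by (simp add: conv_l1_if_delta_right g_real_def mult.commute)
  qed
  have "real_of_int (h k t) = (\<Sum>m<n. conv_l1 (x m) (f_real m k) t)"
    using x_mul_f_real[OF k] by (simp add: vec_mat_l1_def h_real_def fun_eq_iff)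
  also have "\<dots> = real_of_int (M k) * x k t
      - (\<Sum>m<n. \<Sum>s\<in>supp (g m k). real_of_int (g m k s) * x m (t - s))"
    using k by (simp add: conv sum_subtractf)
  also have "(\<Sum>m<n. \<Sum>s\<in>supp (g m k). real_of_int (g m k s) * x m (t - s))
      = (\<Sum>p\<in>Sigma {..<n} (\<lambda>m. supp (g m k)). real_of_int (g (fst p) k (snd p)) * x (fst p) (t - snd p))"
    by (subst sum.Sigma) (use g_fin k in \<open>auto simp: in_ZG_def case_prod_beta\<close>)
  finally show ?thesis by simp
qed

lemma exists_predecessor_not_Ints:
  assumes k: "k < n" and not_int: "real_of_int (M k) * x k t \<notin> \<int>"
  shows "\<exists>m s. m < n \<and> s \<in> supp (g m k) \<and> x m (t - s) \<notin> \<int> \<and>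
    (dist_int (x k t) \<le> 1 / (2 * real_of_int (M k)) \<longrightarrow> dist_int (x k t) \<le> dist_int (x m (t - s)))"
proof -
  let ?I = "Sigma {..<n} (\<lambda>m. supp (g m k))"
  have fin: "finite ?I" using g_fin k by (auto simp: in_ZG_def)
  have "(\<Sum>m<n. norm1_ZG (g m k)) = (\<Sum>p\<in>?I. \<bar>g (fst p) k (snd p)\<bar>)"
    unfolding norm1_ZG_def
    by (subst sum.Sigma) (use g_fin k in \<open>auto simp: in_ZG_def case_prod_beta\<close>)
  hence "(\<Sum>p\<in>?I. \<bar>g (fst p) k (snd p)\<bar>) = (\<Sum>m<n. norm1_ZG (g m k))" by (rule sym)
  also have "\<dots> \<le> M k - 1" using M_dominant k by auto
  finally have "(\<Sum>p\<in>?I. \<bar>g (fst p) k (snd p)\<bar>) \<le> M k - 1" .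
  from exists_summand_not_Ints[OF fin this x_recurrence[OF k] not_int]
  show ?thesis by auto
qed

lemma x_Ints:
  assumes P_add: "\<forall>p\<in>P. \<forall>q\<in>P. p + q \<in> P" and P_0: "0 \<notin> P"
    and supp_g: "\<forall>m<n. \<forall>k<n. supp (g m k) \<subseteq> P"
    and no_fraction: "\<And>k t. k < n \<Longrightarrow> real_of_int (M k) * x k t \<in> \<int> \<Longrightarrow> x k t \<in> \<int>"
    and k: "k < n"
  shows "x k t \<in> \<int>"
proof -
  let ?N = "{(t, k). k < n \<and> x k t \<notin> \<int>}"
  let ?d = "\<lambda>(t, k). dist_int (x k t)"
  define M_max where "M_max = Max (M ` {..<n})"
  have M_le: "M k \<le> M_max" if "k < n" for k unfolding M_max_def using that by (intro Max_ge) auto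
  have "0 < M 0" by (rule M_pos[OF n_pos])
  hence M_max_pos: "M_max > 0" using M_le[OF n_pos] by linarith
  have "?N = {}"
  proof (rule empty_if_subsemigroup_descent[OF P_add P_0, where pos=fst and d="?d"
        and eps="1 / (2 * real_of_int M_max)"])
    show "?d p > 0" if "p \<in> ?N" for p using that by (auto simp: dist_int_pos_iff)
    show "finite {p \<in> ?N. c \<le> ?d p}" if c: "c > 0" for c
    proof (rule finite_subset)
      show "{p \<in> ?N. c \<le> ?d p} \<subseteq> (\<Union>k<n. {t. c \<le> \<bar>x k t\<bar>} \<times> {k})"
        using dist_int_le_abs order_trans by fastforce
      show "finite (\<Union>k<n. {t. c \<le> \<bar>x k t\<bar>} \<times> {k})"
        using finite_level_set_x[OF c] by blast
    qed
    show "1 / (2 * real_of_int M_max) > 0" using M_max_pos by simp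
    show "\<exists>p'\<in>?N. (\<exists>s\<in>P. fst p' = fst p - s) \<and>
        (?d p \<le> 1 / (2 * real_of_int M_max) \<longrightarrow> ?d p \<le> ?d p')" if p: "p \<in> ?N" for p
    proof -
      obtain t k where p_eq: "p = (t, k)" and k: "k < n" and not_int: "x k t \<notin> \<int>"
        using p by auto
      obtain m s where m: "m < n" and s: "s \<in> supp (g m k)" and not_int': "x m (t - s) \<notin> \<int>"
        and closer: "dist_int (x k t) \<le> 1 / (2 * real_of_int (M k)) \<longrightarrow> dist_int (x k t) \<le> dist_int (x m (t - s))"
        using exists_predecessor_not_Ints[OF k] no_fraction[OF k] not_int by blast
      have "1 / (2 * real_of_int M_max) \<le> 1 / (2 * real_of_int (M k))"
        using M_le[OF k] M_pos[OF k] by (simp add: frac_le)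
      moreover have "s \<in> P" using supp_g m k s by blast
      ultimately show ?thesis
        using m not_int' closer by (intro bexI[of _ "(t - s, m)"]) (auto simp: p_eq)
    qed
  qed
  thus ?thesis using k by auto
qed

lemma in_row_module_if_x_Ints:
  assumes ints: "\<And>k t. k < n \<Longrightarrow> x k t \<in> \<int>"
  shows "in_row_module n (fmat M g) h"
proof -
  define a where "a k t = round (x k t)" for k t
  have a_x: "real_of_int (a k t) = x k t" if "k < n" for k t
    using ints[OF that, of t] by (auto simp: a_def elim!: Ints_cases)
  have "in_ZG (a k)" if k: "k < n" for k
  proof -
    have "supp (a k) \<subseteq> {t. 1 \<le> \<bar>x k t\<bar>}"
    proof
      fix t assume "t \<in> supp (a k)"
      hence "1 \<le> \<bar>real_of_int (a k t)\<bar>" by (simp add: supp_def)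
      thus "t \<in> {t. 1 \<le> \<bar>x k t\<bar>}" using a_x[OF k] by simp
    qed
    thus ?thesis unfolding in_ZG_def using finite_level_set_x[of 1 k] finite_subset by auto
  qed
  moreover have "h m = vec_mat_ZG n a (fmat M g) m" if m: "m < n" for m
  proof
    fix t
    have supp_f: "supp (f_real k m) = supp (fmat M g k m)" for k
      by (auto simp: supp_def f_real_def to_real_mat_def)
    have "real_of_int (vec_mat_ZG n a (fmat M g) m t)
        = (\<Sum>k<n. \<Sum>s\<in>supp (f_real k m). x k (t - s) * f_real k m s)"
      unfolding supp_f vec_mat_ZG_def conv_ZG_def of_int_sum of_int_mult
      by (intro sum.cong refl) (simp add: a_x f_real_def to_real_mat_def)
    also have "\<dots> = vec_mat_l1 n x f_real m t"
      unfolding vec_mat_l1_def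
      by (intro sum.cong refl conv_l1_eq_sum_right[symmetric] fin_supp_f_real m) auto
    also have "\<dots> = real_of_int (h m t)" by (simp add: x_mul_f_real[OF m] h_real_def)
    finally show "h m t = vec_mat_ZG n a (fmat M g) m t" by simp
  qed
  ultimately show ?thesis unfolding in_row_module_def by blast
qed

end

theorem lemma5p3:
  fixes n :: nat
    and M :: "nat \<Rightarrow> int"
    and g :: "nat \<Rightarrow> nat \<Rightarrow> 'g::group_add \<Rightarrow> int"
    and P :: "'g set"
    and h :: "nat \<Rightarrow> 'g \<Rightarrow> int"
  assumes "countable (UNIV :: 'g set)" and "infinite (UNIV :: 'g set)"
    and "\<forall>m<n. \<forall>k<n. in_ZG (g m k)"
    and "\<forall>k<n. M k > 0"
    and "\<forall>k<n. M k > (\<Sum>m<n. norm1_ZG (g m k))"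
    and "\<forall>x\<in>P. \<forall>y\<in>P. x + y \<in> P" and "0 \<notin> P"
    and "\<forall>m<n. \<forall>k<n. supp (g m k) \<subseteq> P"
    and "\<forall>k<n. in_ZG (h k)"
    and "\<not> in_row_module n (fmat M g) h"
  shows "\<exists>s k j. k < n \<and> 1 \<le> j \<and> j \<le> M k - 1 \<and>
     vec_mat_l1 n (\<lambda>k t. real_of_int (h k t)) (inv_l1 n (to_real_mat (fmat M g))) k s
       - real_of_int j / real_of_int (M k) \<in> \<int>"
proof (rule ccontr)
  assume no_fraction: "\<not> ?thesis"
  have "n > 0"
    using assms(10) by (rule contrapos_np) (simp add: in_row_module_def)
  then interpret diag_dominant_row n M g h
    using assms(3,5,9) by unfold_locales
  have x_eq: "vec_mat_l1 n (\<lambda>k t. real_of_int (h k t)) (inv_l1 n (to_real_mat (fmat M g))) = x"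
    using inv_l1_f_real by (simp add: x_def h_real_def[abs_def] f_real_def)
  have "x k t \<in> \<int>" if "k < n" for k t
  proof (rule x_Ints[OF assms(6-8) _ that])
    show "x k t \<in> \<int>" if "k < n" "real_of_int (M k) * x k t \<in> \<int>" for k t
      using Ints_if_mult_Ints[OF M_pos] no_fraction that unfolding x_eq by blast
  qed
  with in_row_module_if_x_Ints assms(10) show False by blast
qed

end
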